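(* Let $N\ge1$, $\mu_c>0$, $0<m\le1$, $k=Tr^\alpha>0$, distances $d_1,\dots,d_N>0$, $\alpha\ge2$, and $\eta_1,\dots,\eta_N\in(0,\infty)$. Set $\lambda_{2i-1}=\frac{d_i^{-\alpha}}{\mu_c(1+\eta_i^{-1})}$, $\lambda_{2i}=\frac{d_i^{-\alpha}}{\mu_c(1+\eta_i)}$ for $i=1,\dots,N$, let $\mathbf{D}_\eta=\mathrm{diag}(\lambda_1,\dots,\lambda_{2N})$, let $\mathbf{C}_\eta$ be a $2N\times2N$ symmetric positive definite matrix with unit diagonal, and let $\hat\lambda_1,\dots,\hat\lambda_{2N}$ be the eigenvalues of $\mathbf{D}_\eta\mathbf{C}_\eta$. Define $$C_{p,\eta}=\frac{\Gamma(2N\mu_c+m)}{\Gamma(2N\mu_c+1)\Gamma(m)}\prod_{i=1}^{2N}\left(\frac{1}{km\lambda_i+1}\right)^{\mu_c}F_D^{(2N)}\!\left[1-m,\mu_c,\dots,\mu_c;2N\mu_c+1;\tfrac{1}{km\lambda_1+1},\dots,\tfrac{1}{km\lambda_{2N}+1}\right]$$ and $\hat C_{p,\eta}$ by the same formula with $\hat\lambda_i$ in place of $\lambda_i$. Then $\hat C_{p,\eta}\ge C_{p,\eta}$.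
   Context: $F_D^{(n)}[a,b_1,\dots,b_n;c;x_1,\dots,x_n]=\sum_{i_1,\dots,i_n\ge0}\frac{(a)_{i_1+\dots+i_n}(b_1)_{i_1}\cdots(b_n)_{i_n}}{(c)_{i_1+\dots+i_n}}\prod_j\frac{x_j^{i_j}}{i_j!}$ (Lauricella's fourth function), $(a)_n=\Gamma(a+n)/\Gamma(a)$. Interpretation: $C_{p,\eta}$ is the coverage probability $P(g\ge kI)$ of a user whose channel power $g$ is Gamma with shape $m$ and scale $1/m$, against $N$ independent $\eta$-$\mu$ interferers with common $\mu=\mu_c$, where the total interference equals in law $\sum_{i=1}^{2N}\lambda_iG_i$ with $G_i$ i.i.d. Gamma$(\mu_c,1)$; $\hat C_{p,\eta}$ is the correlated-interferer analogue, with $\mathbf{C}_\eta$ having entries $\sqrt{\rho_{ij}}$ and $\rho_{ij}=0$ whenever $i+j$ is odd. *)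

theory Defs
  imports "HOL-Analysis.Analysis" "Jordan_Normal_Form.Char_Poly"
begin

text \<open>Lauricella's fourth function F_D^(n)[a, b_0..b_(n-1); c; x_0..x_(n-1)]
 (0-based indices), as a sum over all multi-indices i : {0..<n} -> nat
 (functions vanishing outside {0..<n}).\<close>
definition lauricella_FD ::
  "nat \<Rightarrow> real \<Rightarrow> (nat \<Rightarrow> real) \<Rightarrow> real \<Rightarrow> (nat \<Rightarrow> real) \<Rightarrow> real" where
  "lauricella_FD n a b c x =
     (\<Sum>\<^sub>\<infinity> i \<in> {i :: nat \<Rightarrow> nat. \<forall>j. n \<le> j \<longrightarrow> i j = 0}.
        pochhammer a (\<Sum>j<n. i j) * (\<Prod>j<n. pochhammer (b j) (i j))
        / pochhammer c (\<Sum>j<n. i j)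
        * (\<Prod>j<n. x j ^ i j / fact (i j)))"

definition coverage :: "nat \<Rightarrow> real \<Rightarrow> real \<Rightarrow> real \<Rightarrow> (nat \<Rightarrow> real) \<Rightarrow> real" where
  "coverage N mu m k lam =
     Gamma (2 * real N * mu + m) / (Gamma (2 * real N * mu + 1) * Gamma m)
     * (\<Prod>i<2*N. (1 / (k * m * lam i + 1)) powr mu)
     * lauricella_FD (2*N) (1 - m) (\<lambda>_. mu) (2 * real N * mu + 1)
         (\<lambda>i. 1 / (k * m * lam i + 1))"

definition sym_pos_def :: "real mat \<Rightarrow> bool" where
  "sym_pos_def A \<longleftrightarrow> A\<^sup>T = A \<and>
     (\<forall>v \<in> carrier_vec (dim_row A). v \<noteq> 0\<^sub>v (dim_row A) \<longrightarrow> v \<bullet> (A *\<^sub>v v) > 0)"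

end

theory Submission
  imports Defs
begin

text \<open>
  Write \<open>D = diag \<lambda>\<close> and \<open>\<lambda>'\<^sub>i\<close> for the eigenvalues of \<open>D C\<close>. For \<open>s \<ge> 0\<close>,
  \<open>\<Prod>(s + \<lambda>'\<^sub>i) = det (D C + s I) = det D \<cdot> det (C + s D\<inverse>)\<close>, and Hadamard's inequality
  bounds \<open>det (C + s D\<inverse>)\<close> by the product \<open>\<Prod>(1 + s / \<lambda>\<^sub>i)\<close> of its diagonal entries; hence
  \<open>\<Prod>(s + \<lambda>'\<^sub>i) \<le> \<Prod>(s + \<lambda>\<^sub>i)\<close>. Euler's integral representation of \<open>F\<^sub>D\<close> writes the
  coverage probability as a positive multiple of
  \<open>\<integral>\<^sub>0\<^sup>1 t^(-m) (1 - t)^(2N\<mu> + m - 1) \<Prod>\<^sub>i (1 + k m \<lambda>\<^sub>i - t)^(-\<mu>) dt\<close>, and the substitution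
  \<open>s = (1 - t) / (k m)\<close> turns the product inequality into a pointwise comparison of integrands.
\<close>

section \<open>Hadamard's inequality and shifted eigenvalue products\<close>

text \<open>Vectors are functions on \<open>nat\<close> of which only the first \<open>n\<close> values matter; this keeps the
  Schur-complement induction free of vector bookkeeping.\<close>

definition quad_form :: "nat \<Rightarrow> real mat \<Rightarrow> (nat \<Rightarrow> real) \<Rightarrow> real" where
  "quad_form n A v = (\<Sum>i<n. \<Sum>j<n. v i * A $$ (i,j) * v j)"

definition posdef :: "nat \<Rightarrow> real mat \<Rightarrow> bool" where
  "posdef n A \<longleftrightarrow> A \<in> carrier_mat n n \<and> (\<forall>i<n. \<forall>j<n. A $$ (i,j) = A $$ (j,i)) \<and>
     (\<forall>v. (\<exists>i<n. v i \<noteq> 0) \<longrightarrow> quad_form n A v > 0)"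

lemma posdef_diag_pos:
  assumes "posdef n A" "i < n"
  shows "A $$ (i,i) > 0"
proof -
  let ?e = "\<lambda>k. if k = i then 1 else (0::real)"
  have delta: "?e k * x = (if k = i then x else 0)" "x * ?e k = (if k = i then x else 0)"
    for k and x :: real by simp_all
  have "0 < quad_form n A ?e"
    using assms unfolding posdef_def by (metis (mono_tags, lifting) one_neq_zero)
  also have "quad_form n A ?e = A $$ (i,i)"
    using assms(2) by (simp add: quad_form_def delta)
  finally show ?thesis .
qed

definition schur_complement :: "nat \<Rightarrow> real mat \<Rightarrow> real mat" where
  "schur_complement n A =
     mat n n (\<lambda>(i,j). A $$ (Suc i, Suc j) - A $$ (Suc i, 0) * A $$ (0, Suc j) / A $$ (0,0))"

lemma quad_form_schur_complement:
  fixes A :: "real mat" and v :: "nat \<Rightarrow> real"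
  assumes sym: "\<forall>i<Suc n. \<forall>j<Suc n. A $$ (i,j) = A $$ (j,i)" and p: "A $$ (0,0) \<noteq> 0"
  defines "w \<equiv> (\<lambda>k. if k = 0 then - (\<Sum>j<n. A $$ (0, Suc j) * v j) / A $$ (0,0) else v (k - 1))"
  shows "quad_form (Suc n) A w = quad_form n (schur_complement n A) v"
proof -
  let ?p = "A $$ (0,0)"
  define b where "b = (\<Sum>j<n. A $$ (0, Suc j) * v j)"
  have b_sym: "(\<Sum>i<n. v i * A $$ (Suc i, 0)) = b"
    unfolding b_def using sym by (intro sum.cong) auto
  have "quad_form (Suc n) A w = (\<Sum>i<Suc n. w i * (\<Sum>j<Suc n. A $$ (i,j) * w j))"
    unfolding quad_form_def by (simp only: sum_distrib_left mult.assoc)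
  also have "\<dots> = w 0 * (?p * w 0 + b)
      + (\<Sum>i<n. v i * (A $$ (Suc i, 0) * w 0 + (\<Sum>j<n. A $$ (Suc i, Suc j) * v j)))"
    unfolding sum.lessThan_Suc_shift by (simp add: w_def b_def del: sum.lessThan_Suc)
  also have "\<dots> = w 0 * (?p * w 0 + b) + w 0 * (\<Sum>i<n. v i * A $$ (Suc i, 0))
      + (\<Sum>i<n. \<Sum>j<n. v i * A $$ (Suc i, Suc j) * v j)"
    by (simp add: algebra_simps sum.distrib sum_distrib_left sum_distrib_right)
  also have "\<dots> = (\<Sum>i<n. \<Sum>j<n. v i * A $$ (Suc i, Suc j) * v j)
      - (\<Sum>i<n. v i * A $$ (Suc i, 0)) * (\<Sum>j<n. A $$ (0, Suc j) * v j) / ?p"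
    using p unfolding b_sym by (simp add: w_def b_def field_simps)
  also have "\<dots> = quad_form n (schur_complement n A) v"
    unfolding quad_form_def schur_complement_def
    by (simp add: sum_distrib_left sum_distrib_right sum_subtractf sum_divide_distrib algebra_simps)
  finally show ?thesis .
qed

lemma det_schur_complement:
  fixes A :: "real mat"
  assumes A: "A \<in> carrier_mat (Suc n) (Suc n)" and p: "A $$ (0,0) \<noteq> 0"
  shows "det A = A $$ (0,0) * det (schur_complement n A)"
proof -
  let ?p = "A $$ (0,0)"
  define L where "L = mat (Suc n) (Suc n) (\<lambda>(i,j). (if i = j then 1 else 0)
      + (if j = 0 \<and> i \<noteq> 0 then - A $$ (i,0) / ?p else (0::real)))"
  have L: "L \<in> carrier_mat (Suc n) (Suc n)" unfolding L_def by auto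
  have "det L = prod_list (diag_mat L)"
    by (rule det_lower_triangular[OF _ L]) (auto simp: L_def)
  also have "diag_mat L = map (\<lambda>_. 1) [0..<Suc n]"
    unfolding diag_mat_def L_def by (intro map_cong) auto
  also have "prod_list \<dots> = 1" by (simp add: map_replicate_const)
  finally have det_L: "det L = 1" .
  define B where "B = four_block_mat (mat 1 1 (\<lambda>_. ?p)) (mat 1 n (\<lambda>(_,j). A $$ (0, Suc j)))
      (0\<^sub>m n 1) (schur_complement n A)"
  have "L * A = B"
  proof (rule eq_matI)
    show "dim_row (L * A) = dim_row B" "dim_col (L * A) = dim_col B"
      using A by (auto simp: B_def L_def schur_complement_def)
    fix i j assume "i < dim_row B" "j < dim_col B"
    hence i: "i < Suc n" and j: "j < Suc n" by (auto simp: B_def schur_complement_def)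
    have "(L * A) $$ (i,j) = (\<Sum>k<Suc n. L $$ (i,k) * A $$ (k,j))"
      using A i j by (simp add: L_def scalar_prod_def atLeast0LessThan)
    also have "\<dots> = (\<Sum>k<Suc n. (if i = k then A $$ (k,j) else 0)
        + (if k = 0 \<and> i \<noteq> 0 then - A $$ (i,0) / ?p * A $$ (k,j) else 0))"
      using i by (intro sum.cong) (auto simp: L_def)
    also have "\<dots> = A $$ (i,j) + (if i \<noteq> 0 then - A $$ (i,0) / ?p * A $$ (0,j) else 0)"
      using i by (simp add: sum.distrib)
    also have "\<dots> = B $$ (i,j)"
      using i j p by (cases i; cases j) (auto simp: B_def schur_complement_def)
    finally show "(L * A) $$ (i,j) = B $$ (i,j)" .
  qed
  hence "det A = det B"
    using det_mult[OF L A] det_L by simp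
  also have "\<dots> = det (mat 1 1 (\<lambda>_. ?p)) * det (schur_complement n A)"
    unfolding B_def
    by (rule det_four_block_mat_lower_left_zero_col) (auto simp: schur_complement_def)
  also have "det (mat 1 1 (\<lambda>_. ?p)) = ?p" by (subst det_single) auto
  finally show ?thesis .
qed

lemma posdef_schur_complement:
  assumes "posdef (Suc n) A"
  shows "posdef n (schur_complement n A)"
  unfolding posdef_def
proof (intro conjI allI impI)
  let ?S = "schur_complement n A"
  have sym: "\<forall>i<Suc n. \<forall>j<Suc n. A $$ (i,j) = A $$ (j,i)"
    using assms unfolding posdef_def by blast
  show "?S \<in> carrier_mat n n" by (simp add: schur_complement_def)
  show "?S $$ (i,j) = ?S $$ (j,i)" if "i < n" "j < n" for i j
    using that sym unfolding schur_complement_def by (simp add: mult.commute)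
  fix v :: "nat \<Rightarrow> real" assume "\<exists>i<n. v i \<noteq> 0"
  then obtain i where i: "i < n" "v i \<noteq> 0" by blast
  define w where "w = (\<lambda>k. if k = 0 then - (\<Sum>j<n. A $$ (0, Suc j) * v j) / A $$ (0,0) else v (k - 1))"
  have "\<exists>k<Suc n. w k \<noteq> 0"
    using i by (intro exI[of _ "Suc i"]) (simp add: w_def)
  hence "quad_form (Suc n) A w > 0"
    using assms unfolding posdef_def by blast
  also have "quad_form (Suc n) A w = quad_form n ?S v"
    unfolding w_def using posdef_diag_pos[OF assms, of 0]
    by (intro quad_form_schur_complement[OF sym]) simp
  finally show "quad_form n ?S v > 0" .
qed

lemma schur_complement_diag_le:
  assumes "posdef (Suc n) A" "i < n"
  shows "schur_complement n A $$ (i,i) \<le> A $$ (Suc i, Suc i)"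
proof -
  have "A $$ (0, Suc i) = A $$ (Suc i, 0)"
    using assms unfolding posdef_def by auto
  hence "schur_complement n A $$ (i,i) = A $$ (Suc i, Suc i) - (A $$ (Suc i, 0))\<^sup>2 / A $$ (0,0)"
    using assms(2) by (simp add: schur_complement_def power2_eq_square)
  thus ?thesis using posdef_diag_pos[OF assms(1), of 0] by simp
qed

lemma hadamard_inequality:
  "posdef n A \<Longrightarrow> 0 < det A \<and> det A \<le> (\<Prod>i<n. A $$ (i,i))"
proof (induction n arbitrary: A)
  case 0
  then show ?case unfolding posdef_def by auto
next
  case (Suc n)
  let ?S = "schur_complement n A"
  have A: "A \<in> carrier_mat (Suc n) (Suc n)"
    using Suc.prems unfolding posdef_def by blast
  have p: "A $$ (0,0) > 0" using posdef_diag_pos[OF Suc.prems] by simp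
  have S: "posdef n ?S" by (rule posdef_schur_complement[OF Suc.prems])
  have det_A: "det A = A $$ (0,0) * det ?S" using det_schur_complement[OF A] p by simp
  from Suc.IH[OF S] have IH: "0 < det ?S" "det ?S \<le> (\<Prod>i<n. ?S $$ (i,i))" by auto
  have "(\<Prod>i<n. ?S $$ (i,i)) \<le> (\<Prod>i<n. A $$ (Suc i, Suc i))"
    using posdef_diag_pos[OF S] schur_complement_diag_le[OF Suc.prems]
    by (intro prod_mono) (simp add: less_imp_le)
  hence "det A \<le> A $$ (0,0) * (\<Prod>i<n. A $$ (Suc i, Suc i))"
    unfolding det_A using IH p by (meson mult_left_mono order.trans less_imp_le)
  also have "\<dots> = (\<Prod>i<Suc n. A $$ (i,i))" by (simp only: prod.lessThan_Suc_shift)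
  finally show ?case using det_A IH p by simp
qed

lemma sym_pos_def_posdef:
  assumes "C \<in> carrier_mat n n" "sym_pos_def C"
  shows "posdef n C"
  unfolding posdef_def
proof (intro conjI allI impI)
  show "C \<in> carrier_mat n n" by (fact assms(1))
  have "C\<^sup>T = C" using assms(2) by (simp add: sym_pos_def_def)
  thus "C $$ (i,j) = C $$ (j,i)" if "i < n" "j < n" for i j
    using that assms(1) by (metis carrier_matD index_transpose_mat(1))
  fix v :: "nat \<Rightarrow> real" assume "\<exists>i<n. v i \<noteq> 0"
  hence "vec n v \<noteq> 0\<^sub>v n" by (metis index_vec index_zero_vec(1))
  hence "vec n v \<bullet> (C *\<^sub>v vec n v) > 0"
    using assms unfolding sym_pos_def_def by auto
  also have "vec n v \<bullet> (C *\<^sub>v vec n v) = quad_form n C v"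
    using assms(1) unfolding quad_form_def
    by (simp add: scalar_prod_def mult_mat_vec_def sum_distrib_left atLeast0LessThan mult.assoc)
  finally show "quad_form n C v > 0" .
qed

lemma posdef_add_mat_diag:
  assumes A: "posdef n A" and e: "\<forall>i<n. 0 \<le> e i"
  shows "posdef n (A + mat_diag n e)"
  unfolding posdef_def
proof (intro conjI allI impI)
  have A_carrier: "A \<in> carrier_mat n n" using A unfolding posdef_def by blast
  thus "A + mat_diag n e \<in> carrier_mat n n" by simp
  show "(A + mat_diag n e) $$ (i,j) = (A + mat_diag n e) $$ (j,i)" if "i < n" "j < n" for i j
    using that A A_carrier unfolding posdef_def by (auto simp: mat_diag_def)
  fix v :: "nat \<Rightarrow> real" assume "\<exists>i<n. v i \<noteq> 0"
  hence "quad_form n A v > 0" using A unfolding posdef_def by blast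
  moreover have "quad_form n (A + mat_diag n e) v
      = (\<Sum>i<n. \<Sum>j<n. (if i = j then e i * (v i)\<^sup>2 else 0) + v i * A $$ (i,j) * v j)"
    using A_carrier unfolding quad_form_def
    by (intro sum.cong refl) (auto simp: mat_diag_def algebra_simps power2_eq_square)
  moreover have "\<dots> = (\<Sum>i<n. e i * (v i)\<^sup>2) + quad_form n A v"
    by (simp add: sum.distrib quad_form_def)
  moreover have "(\<Sum>i<n. e i * (v i)\<^sup>2) \<ge> 0" using e by (intro sum_nonneg) simp
  ultimately show "quad_form n (A + mat_diag n e) v > 0" by linarith
qed

lemma det_mat_diag: "det (mat_diag n f) = (\<Prod>i<n. f i :: 'a :: comm_ring_1)"
  by (subst det_upper_triangular[of _ n])
    (auto simp: mat_diag_def diag_mat_def prod.list_conv_set_nth atLeast0LessThan)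

lemma poly_char_poly_uminus:
  assumes "(A :: 'a :: field mat) \<in> carrier_mat n n"
  shows "poly (char_poly A) (- s) = (-1) ^ n * det (A + s \<cdot>\<^sub>m 1\<^sub>m n)"
proof -
  have "- char_matrix A (- s) = (-1) \<cdot>\<^sub>m (A + s \<cdot>\<^sub>m 1\<^sub>m n)"
    using assms by (auto simp: char_matrix_def intro!: eq_matI)
  thus ?thesis
    using assms by (simp add: char_poly_matrix det_smult)
qed

lemma prod_shifted_eigenvalues_le:
  fixes C :: "real mat" and lam lamhat :: "nat \<Rightarrow> real"
  assumes C: "C \<in> carrier_mat n n" "sym_pos_def C" "\<forall>i<n. C $$ (i,i) = 1"
    and lam: "\<forall>i<n. lam i > 0"
    and char_poly: "char_poly (mat_diag n lam * C) = (\<Prod>i<n. [:- lamhat i, 1:])"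
    and s: "s \<ge> 0"
  shows "0 < (\<Prod>i<n. s + lamhat i) \<and> (\<Prod>i<n. s + lamhat i) \<le> (\<Prod>i<n. s + lam i)"
proof -
  define P where "P = C + mat_diag n (\<lambda>i. s / lam i)"
  have P_carrier: "P \<in> carrier_mat n n" using C by (simp add: P_def)
  have P_posdef: "posdef n P"
    unfolding P_def using lam s
    by (intro posdef_add_mat_diag sym_pos_def_posdef[OF C(1,2)]) auto
  have "(\<Prod>i<n. P $$ (i,i)) = (\<Prod>i<n. 1 + s / lam i)"
    using C(1,3) by (intro prod.cong) (auto simp: P_def mat_diag_def)
  hence det_P: "0 < det P" "det P \<le> (\<Prod>i<n. 1 + s / lam i)"
    using hadamard_inequality[OF P_posdef] by auto
  have "mat_diag n lam * mat_diag n (\<lambda>i. s / lam i) = s \<cdot>\<^sub>m 1\<^sub>m n"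
    unfolding mat_diag_diag using lam by (auto simp: mat_diag_def intro!: eq_matI)
  hence "mat_diag n lam * P = mat_diag n lam * C + s \<cdot>\<^sub>m 1\<^sub>m n"
    unfolding P_def using mult_add_distrib_mat[OF mat_diag_dim C(1) mat_diag_dim] by simp
  hence "(-1) ^ n * det (mat_diag n lam * P) = poly (char_poly (mat_diag n lam * C)) (- s)"
    using poly_char_poly_uminus[OF mult_carrier_mat[OF mat_diag_dim C(1)]] by simp
  also have "\<dots> = (\<Prod>i<n. (-1) * (s + lamhat i))"
    unfolding char_poly poly_prod by (intro prod.cong) auto
  also have "\<dots> = (-1) ^ n * (\<Prod>i<n. s + lamhat i)"
    by (simp only: prod.distrib prod_constant card_lessThan)
  finally have eq: "(\<Prod>i<n. s + lamhat i) = (\<Prod>i<n. lam i) * det P"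
    using det_mult[OF mat_diag_dim P_carrier] by (simp add: det_mat_diag)
  have lam_prod: "(\<Prod>i<n. lam i) > 0" using lam by (intro prod_pos) auto
  have "(\<Prod>i<n. lam i) * det P \<le> (\<Prod>i<n. lam i) * (\<Prod>i<n. 1 + s / lam i)"
    using det_P lam_prod by simp
  also have "\<dots> = (\<Prod>i<n. s + lam i)"
    unfolding prod.distrib[symmetric] using lam by (intro prod.cong) (auto simp: field_simps)
  finally show ?thesis using eq lam_prod det_P by simp
qed

section \<open>Multiple negative binomial series\<close>

lemma nn_integral_count_space_has_sum:
  fixes f :: "'a \<Rightarrow> real"
  assumes "(f has_sum S) A" "\<And>x. x \<in> A \<Longrightarrow> 0 \<le> f x"
  shows "(\<integral>\<^sup>+x. ennreal (f x) \<partial>count_space A) = ennreal S"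
proof -
  have "Infinite_Sum.abs_summable_on f A"
    using has_sum_imp_summable[OF assms(1)] summable_on_iff_abs_summable_on_real by blast
  hence abs: "Infinite_Set_Sum.abs_summable_on f A" using abs_summable_equivalent by blast
  have "(\<integral>\<^sup>+x. ennreal (f x) \<partial>count_space A) = ennreal (infsetsum f A)"
    by (rule nn_integral_conv_infsetsum[OF abs assms(2)])
  also have "infsetsum f A = S" using infsetsum_infsum[OF abs] infsumI[OF assms(1)] by simp
  finally show ?thesis .
qed

lemma has_sum_nn_integral_count_space:
  fixes f :: "'a \<Rightarrow> real"
  assumes nonneg: "\<And>x. x \<in> A \<Longrightarrow> 0 \<le> f x"
    and R: "(\<integral>\<^sup>+x. ennreal (f x) \<partial>count_space A) = R" and finite: "R \<noteq> \<infinity>"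
  shows "(f has_sum enn2real R) A"
proof -
  have "(\<integral>\<^sup>+x. ennreal (norm (f x)) \<partial>count_space A) = R"
    using nonneg R by (subst nn_integral_cong[of _ _ "\<lambda>x. ennreal (f x)"]) auto
  hence "integrable (count_space A) f"
    using finite by (subst integrable_iff_bounded) (auto simp: top.not_eq_extremum)
  hence abs: "Infinite_Set_Sum.abs_summable_on f A" by (simp add: abs_summable_on_def)
  hence "R = ennreal (infsum f A)"
    using R nn_integral_conv_infsetsum[OF abs nonneg] infsetsum_infsum[OF abs] by simp
  moreover have "f summable_on A"
    using abs abs_summable_equivalent abs_summable_summable by blast
  moreover have "infsum f A \<ge> 0" using nonneg by (rule infsum_nonneg)
  ultimately show ?thesis by (simp add: has_sum_infsum)
qed

definition multi_indices :: "nat \<Rightarrow> (nat \<Rightarrow> nat) set" where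
  "multi_indices n = {i. \<forall>j. n \<le> j \<longrightarrow> i j = 0}"

lemma countable_multi_indices: "countable (multi_indices n)"
proof -
  have "multi_indices n \<subseteq> (\<lambda>xs j. if j < length xs then xs ! j else 0) ` UNIV"
  proof
    fix i assume "i \<in> multi_indices n"
    hence "i = (\<lambda>j. if j < length (map i [0..<n]) then map i [0..<n] ! j else 0)"
      by (auto simp: multi_indices_def fun_eq_iff)
    thus "i \<in> (\<lambda>xs j. if j < length xs then xs ! j else 0) ` UNIV" by blast
  qed
  thus ?thesis by (rule countable_subset) simp
qed

lemma multi_indices_Suc: "multi_indices (Suc n) = (\<lambda>(i,r). i(n := r)) ` (multi_indices n \<times> UNIV)"
proof (intro equalityI subsetI)
  fix i assume "i \<in> multi_indices (Suc n)"
  hence "i(n := 0) \<in> multi_indices n" by (auto simp: multi_indices_def)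
  thus "i \<in> (\<lambda>(i,r). i(n := r)) ` (multi_indices n \<times> UNIV)"
    by (intro image_eqI[of _ _ "(i(n := 0), i n)"]) auto
qed (auto simp: multi_indices_def)

lemma inj_on_multi_indices_Suc: "inj_on (\<lambda>(i,r). i(n := r)) (multi_indices n \<times> UNIV)"
proof (rule inj_onI, clarify)
  fix i r i' r' assume i: "i \<in> multi_indices n" "i' \<in> multi_indices n"
    and eq: "i(n := r) = i'(n := r')"
  have "i j = i' j" for j
    using fun_cong[OF eq, of j] i by (cases "j = n") (auto simp: multi_indices_def)
  thus "i = i' \<and> r = r'" using fun_cong[OF eq, of n] by auto
qed

lemma neg_binomial_has_sum:
  fixes b y :: real
  assumes "0 < b" "0 \<le> y" "y < 1"
  shows "((\<lambda>r. pochhammer b r / fact r * y ^ r) has_sum (1 - y) powr (- b)) UNIV"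
proof (rule sums_nonneg_imp_has_sum)
  have "(\<lambda>r. ((- b) gchoose r) * (- y) ^ r) sums (1 + (- y)) powr (- b)"
    by (rule gen_binomial_real) (use assms in auto)
  moreover have "((- b) gchoose r) * (- y) ^ r = pochhammer b r / fact r * y ^ r" for r
    unfolding gbinomial_pochhammer by (simp add: power_mult_distrib[symmetric] field_simps)
  ultimately show "(\<lambda>r. pochhammer b r / fact r * y ^ r) sums (1 - y) powr (- b)" by simp
  show "0 \<le> pochhammer b r / fact r * y ^ r" for r
    using assms by (intro mult_nonneg_nonneg divide_nonneg_nonneg pochhammer_nonneg) auto
qed

lemma has_sum_Times_mult_nonneg:
  fixes f g :: "_ \<Rightarrow> real"
  assumes f: "(f has_sum S) A" and g: "(g has_sum T) B"
    and nonneg: "\<forall>x\<in>A. 0 \<le> f x" "\<forall>y\<in>B. 0 \<le> g y"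
  shows "((\<lambda>(x, y). f x * g y) has_sum S * T) (A \<times> B)"
proof (rule has_sum_SigmaI)
  show inner: "((\<lambda>y. case (x, y) of (x, y) \<Rightarrow> f x * g y) has_sum f x * T) B" for x
    using has_sum_cmult_right[OF g] by simp
  show outer: "((\<lambda>x. f x * T) has_sum S * T) A"
    by (rule has_sum_cmult_left[OF f])
  show "(\<lambda>(x, y). f x * g y) summable_on A \<times> B"
    using inner has_sum_imp_summable[OF outer] nonneg by (intro summable_on_SigmaI) auto
qed

lemma multi_neg_binomial_has_sum:
  fixes b y :: "nat \<Rightarrow> real"
  assumes "\<forall>j<n. 0 < b j \<and> 0 \<le> y j \<and> y j < 1"
  shows "((\<lambda>i. \<Prod>j<n. pochhammer (b j) (i j) / fact (i j) * y j ^ i j)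
           has_sum (\<Prod>j<n. (1 - y j) powr (- b j))) (multi_indices n)"
  using assms
proof (induction n)
  case 0
  have "multi_indices 0 = {\<lambda>_. 0}" by (auto simp: multi_indices_def)
  thus ?case using has_sum_finite[of "{\<lambda>_. 0::nat}" "\<lambda>_. 1::real"] by simp
next
  case (Suc n)
  define c where "c = (\<lambda>j r. pochhammer (b j) r / fact r * y j ^ r)"
  have c_nonneg: "0 \<le> c j r" if "j \<le> n" for j r
    using Suc.prems that unfolding c_def
    by (intro mult_nonneg_nonneg divide_nonneg_nonneg pochhammer_nonneg) auto
  have IH: "((\<lambda>i. \<Prod>j<n. c j (i j)) has_sum (\<Prod>j<n. (1 - y j) powr (- b j))) (multi_indices n)"
    using Suc by (simp add: c_def)
  have last: "(c n has_sum (1 - y n) powr (- b n)) UNIV"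
    unfolding c_def using Suc.prems by (intro neg_binomial_has_sum) auto
  have "((\<lambda>(i, r). (\<Prod>j<n. c j (i j)) * c n r) has_sum
      (\<Prod>j<n. (1 - y j) powr (- b j)) * (1 - y n) powr (- b n)) (multi_indices n \<times> UNIV)"
    using c_nonneg by (intro has_sum_Times_mult_nonneg[OF IH last]) (auto intro: prod_nonneg)
  moreover have "(\<Prod>j<Suc n. c j ((i(n := r)) j)) = (\<Prod>j<n. c j (i j)) * c n r" for i r
  proof -
    have "(\<Prod>j<n. c j ((i(n := r)) j)) = (\<Prod>j<n. c j (i j))" by (intro prod.cong) auto
    thus ?thesis by simp
  qed
  ultimately have "((\<lambda>i. \<Prod>j<Suc n. c j (i j)) \<circ> (\<lambda>(i, r). i(n := r)) has_sum
      (\<Prod>j<Suc n. (1 - y j) powr (- b j))) (multi_indices n \<times> UNIV)"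
    by (simp add: case_prod_beta' o_def)
  hence "((\<lambda>i. \<Prod>j<Suc n. c j (i j)) has_sum (\<Prod>j<Suc n. (1 - y j) powr (- b j)))
      (multi_indices (Suc n))"
    unfolding multi_indices_Suc by (rule iffD2[OF has_sum_reindex[OF inj_on_multi_indices_Suc]])
  thus ?case by (simp add: c_def)
qed

section \<open>Euler's integral for Lauricella's \<open>F\<^sub>D\<close>\<close>

lemma nn_integral_Beta_moment:
  fixes a b K :: real
  assumes a: "a > 0" and b: "b > 0" and K: "K \<ge> 0"
  shows "(\<integral>\<^sup>+t. ennreal (t powr (a - 1) * (1 - t) powr (b - 1) * t ^ n * K) * indicator {0..1} t \<partial>lborel)
          = ennreal (K * Beta (a + real n) b)"
proof -
  have Beta: "((\<lambda>t. t powr (a + real n - 1) * (1 - t) powr (b - 1) * K) has_integral (Beta (a + real n) b * K)) {0..1}"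
    using has_integral_mult_left[OF has_integral_Beta_real[of "a + real n" b]] a b by simp
  have shift: "t powr (a - 1) * (1 - t) powr (b - 1) * t ^ n * K
      = t powr (a + real n - 1) * (1 - t) powr (b - 1) * K" if "0 \<le> t" for t
  proof -
    have "t powr (a - 1) * t ^ n = t powr (a + real n - 1)"
      using that by (cases "t = 0") (simp_all add: powr_realpow[symmetric] powr_add[symmetric] algebra_simps)
    thus ?thesis by (metis mult.assoc mult.commute)
  qed
  have "(\<integral>\<^sup>+t. ennreal (t powr (a - 1) * (1 - t) powr (b - 1) * t ^ n * K) * indicator {0..1} t \<partial>lborel)
     = (\<integral>\<^sup>+t. ennreal (t powr (a + real n - 1) * (1 - t) powr (b - 1) * K) * indicator {0..1} t \<partial>lborel)"
    by (intro nn_integral_cong) (simp add: indicator_def shift)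
  also have "\<dots> = ennreal (Beta (a + real n) b * K)"
    by (rule nn_integral_has_integral_lebesgue'[OF _ Beta]) (use K in auto)
  finally show ?thesis by (simp add: mult.commute)
qed

lemma Beta_mult_pochhammer_quotient:
  fixes a c :: real
  assumes "0 < a" "a < c"
  shows "Beta a (c - a) * (pochhammer a n / pochhammer c n) = Beta (a + real n) (c - a)"
proof -
  have not_nonpos: "a \<notin> \<int>\<^sub>\<le>\<^sub>0" "c \<notin> \<int>\<^sub>\<le>\<^sub>0"
    using assms nonpos_Ints_nonpos by force+
  have "Gamma a > 0" "Gamma c > 0" "Gamma (c - a) > 0" "Gamma (a + real n) > 0" "Gamma (c + real n) > 0"
    using assms by (auto intro!: Gamma_real_pos)
  moreover have "a + real n + (c - a) = c + real n" by simp
  ultimately show ?thesis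
    unfolding Beta_def pochhammer_Gamma[OF not_nonpos(1)] pochhammer_Gamma[OF not_nonpos(2)]
    by (simp add: field_simps)
qed

definition lauricella_term ::
  "nat \<Rightarrow> real \<Rightarrow> (nat \<Rightarrow> real) \<Rightarrow> real \<Rightarrow> (nat \<Rightarrow> real) \<Rightarrow> (nat \<Rightarrow> nat) \<Rightarrow> real" where
  "lauricella_term n a b c x i = pochhammer a (\<Sum>j<n. i j) / pochhammer c (\<Sum>j<n. i j)
     * (\<Prod>j<n. pochhammer (b j) (i j) / fact (i j) * x j ^ i j)"

lemma lauricella_FD_eq_infsum:
  "lauricella_FD n a b c x = infsum (lauricella_term n a b c x) (multi_indices n)"
  unfolding lauricella_FD_def lauricella_term_def multi_indices_def
  by (intro infsum_cong) (simp add: prod.distrib[symmetric] field_simps)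

lemma Beta_mult_lauricella_term:
  fixes a c :: real and b x :: "nat \<Rightarrow> real"
  assumes a: "0 < a" "a < c" and bx: "\<forall>j<n. 0 < b j \<and> 0 \<le> x j"
  shows "ennreal (Beta a (c - a) * lauricella_term n a b c x i) =
    (\<integral>\<^sup>+t. ennreal (t powr (a - 1) * (1 - t) powr (c - a - 1)
        * (\<Prod>j<n. pochhammer (b j) (i j) / fact (i j) * (x j * t) ^ i j)) * indicator {0..1} t \<partial>lborel)"
proof -
  define F where "F = (\<Prod>j<n. pochhammer (b j) (i j) / fact (i j) * x j ^ i j)"
  have F: "F \<ge> 0"
    unfolding F_def using bx
    by (intro prod_nonneg mult_nonneg_nonneg divide_nonneg_nonneg pochhammer_nonneg) auto
  have "(\<Prod>j<n. pochhammer (b j) (i j) / fact (i j) * (x j * t) ^ i j) = t ^ (\<Sum>j<n. i j) * F" for t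
    unfolding F_def power_sum prod.distrib[symmetric] by (intro prod.cong) (auto simp: power_mult_distrib)
  hence "(\<integral>\<^sup>+t. ennreal (t powr (a - 1) * (1 - t) powr (c - a - 1)
        * (\<Prod>j<n. pochhammer (b j) (i j) / fact (i j) * (x j * t) ^ i j)) * indicator {0..1} t \<partial>lborel)
      = ennreal (F * Beta (a + real (\<Sum>j<n. i j)) (c - a))"
    using nn_integral_Beta_moment[of a "c - a" F "\<Sum>j<n. i j"] a F by (simp add: ac_simps)
  also have "F * Beta (a + real (\<Sum>j<n. i j)) (c - a) = Beta a (c - a) * lauricella_term n a b c x i"
    unfolding lauricella_term_def F_def Beta_mult_pochhammer_quotient[OF a, symmetric] by simp
  finally show ?thesis by simp
qed

lemma nn_integral_lauricella_terms:
  fixes a c :: real and b x :: "nat \<Rightarrow> real"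
  assumes a: "0 < a" "a < c" and bx: "\<forall>j<n. 0 < b j \<and> 0 \<le> x j \<and> x j < 1"
  shows "(\<integral>\<^sup>+i. ennreal (Beta a (c - a) * lauricella_term n a b c x i) \<partial>count_space (multi_indices n)) =
    (\<integral>\<^sup>+t. ennreal (t powr (a - 1) * (1 - t) powr (c - a - 1) * (\<Prod>j<n. (1 - x j * t) powr (- b j)))
        * indicator {0..1} t \<partial>lborel)"
proof -
  define f where "f = (\<lambda>i t. ennreal (t powr (a - 1) * (1 - t) powr (c - a - 1)
        * (\<Prod>j<n. pochhammer (b j) (i j) / fact (i j) * (x j * t) ^ i j)) * indicator {0..1} t)"
  have "(\<integral>\<^sup>+i. f i t \<partial>count_space (multi_indices n)) =
      ennreal (t powr (a - 1) * (1 - t) powr (c - a - 1) * (\<Prod>j<n. (1 - x j * t) powr (- b j)))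
        * indicator {0..1} t" for t
  proof (cases "t \<in> {0..1}")
    case True
    define \<phi> where "\<phi> = t powr (a - 1) * (1 - t) powr (c - a - 1)"
    have "\<forall>j<n. 0 < b j \<and> 0 \<le> x j * t \<and> x j * t < 1"
      using bx True by (auto intro: le_less_trans[OF mult_left_le])
    from has_sum_cmult_right[OF multi_neg_binomial_has_sum[OF this], of \<phi>]
    have "(\<integral>\<^sup>+i. ennreal (\<phi> * (\<Prod>j<n. pochhammer (b j) (i j) / fact (i j) * (x j * t) ^ i j))
        \<partial>count_space (multi_indices n)) = ennreal (\<phi> * (\<Prod>j<n. (1 - x j * t) powr (- b j)))"
      using True bx unfolding \<phi>_def
      by (intro nn_integral_count_space_has_sum)
        (auto intro!: prod_nonneg mult_nonneg_nonneg divide_nonneg_nonneg pochhammer_nonneg)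
    thus ?thesis using True by (simp add: f_def \<phi>_def)
  qed (simp add: f_def)
  moreover have "f i \<in> borel_measurable lborel" for i unfolding f_def by measurable
  ultimately show ?thesis
    using Beta_mult_lauricella_term[OF a] bx countable_multi_indices
    by (simp add: f_def nn_integral_count_space_nn_integral[symmetric])
qed

lemma Euler_integral_finite:
  fixes a c :: real and b x :: "nat \<Rightarrow> real"
  assumes a: "0 < a" "a < c" and bx: "\<forall>j<n. 0 < b j \<and> 0 \<le> x j \<and> x j < 1"
  shows "(\<integral>\<^sup>+t. ennreal (t powr (a - 1) * (1 - t) powr (c - a - 1) * (\<Prod>j<n. (1 - x j * t) powr (- b j)))
        * indicator {0..1} t \<partial>lborel) \<noteq> \<infinity>"
proof -
  define Q where "Q = (\<Prod>j<n. (1 - x j) powr (- b j))"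
  have Q: "Q \<ge> 0" unfolding Q_def by (intro prod_nonneg) auto
  have "(\<Prod>j<n. (1 - x j * t) powr (- b j)) \<le> Q" if "t \<in> {0..1}" for t
    unfolding Q_def using bx that
    by (intro prod_mono conjI powr_mono2') (auto simp: mult_left_le)
  hence "(\<integral>\<^sup>+t. ennreal (t powr (a - 1) * (1 - t) powr (c - a - 1) * (\<Prod>j<n. (1 - x j * t) powr (- b j)))
        * indicator {0..1} t \<partial>lborel)
      \<le> (\<integral>\<^sup>+t. ennreal (t powr (a - 1) * (1 - t) powr (c - a - 1) * t ^ 0 * Q) * indicator {0..1} t \<partial>lborel)"
    by (intro nn_integral_mono) (auto simp: indicator_def intro!: ennreal_leI mult_left_mono)
  also have "\<dots> = ennreal (Q * Beta (a + real 0) (c - a))"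
    by (rule nn_integral_Beta_moment) (use a Q in auto)
  finally show ?thesis by (auto simp: top_unique)
qed

theorem lauricella_FD_Euler_integral:
  fixes a c :: real and b x :: "nat \<Rightarrow> real"
  assumes a: "0 < a" "a < c" and bx: "\<forall>j<n. 0 < b j \<and> 0 \<le> x j \<and> x j < 1"
  shows "ennreal (Beta a (c - a) * lauricella_FD n a b c x) =
    (\<integral>\<^sup>+t. ennreal (t powr (a - 1) * (1 - t) powr (c - a - 1) * (\<Prod>j<n. (1 - x j * t) powr (- b j)))
        * indicator {0..1} t \<partial>lborel)" (is "_ = ?R")
proof -
  have "Beta a (c - a) > 0"
    unfolding Beta_def using a by (auto intro!: Gamma_real_pos divide_pos_pos mult_pos_pos)
  hence "0 \<le> Beta a (c - a) * lauricella_term n a b c x i" for i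
    unfolding lauricella_term_def using a bx
    by (intro mult_nonneg_nonneg divide_nonneg_nonneg prod_nonneg pochhammer_nonneg) auto
  hence "((\<lambda>i. Beta a (c - a) * lauricella_term n a b c x i) has_sum enn2real ?R) (multi_indices n)"
    using nn_integral_lauricella_terms[OF a bx] Euler_integral_finite[OF a bx]
    by (intro has_sum_nn_integral_count_space)
  hence "Beta a (c - a) * lauricella_FD n a b c x = enn2real ?R"
    unfolding lauricella_FD_eq_infsum infsum_cmult_right'[symmetric] by (rule infsumI)
  thus ?thesis using Euler_integral_finite[OF a bx] by (simp add: less_top)
qed

lemma lauricella_FD_zero_left: "lauricella_FD n 0 b c x = 1"
proof -
  have "lauricella_term n 0 b c x i = (if i = (\<lambda>_. 0) then 1 else 0)" if "i \<in> multi_indices n" for i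
  proof (cases "i = (\<lambda>_. 0)")
    case False
    then obtain j where j: "i j \<noteq> 0" by auto
    have "j < n"
      using that j unfolding multi_indices_def by (auto simp: not_less[symmetric])
    with j have "(\<Sum>j<n. i j) \<noteq> 0" by (auto simp: sum_eq_0_iff)
    thus ?thesis using False by (simp add: lauricella_term_def pochhammer_0_left)
  qed (simp add: lauricella_term_def)
  hence "lauricella_FD n 0 b c x = infsum (\<lambda>i. if i = (\<lambda>_. 0) then 1 else 0) (multi_indices n)"
    unfolding lauricella_FD_eq_infsum by (rule infsum_cong)
  also have "\<dots> = 1"
    by (subst infsum_cong_neutral[where T = "{\<lambda>_. 0}" and g = "\<lambda>_. 1"])
      (auto simp: multi_indices_def)
  finally show ?thesis .
qed

lemma lauricella_FD_nonneg:
  assumes "0 < a" "0 < c" "\<forall>j<n. 0 < b j \<and> 0 \<le> x j"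
  shows "lauricella_FD n a b c x \<ge> 0"
  unfolding lauricella_FD_def using assms
  by (intro infsum_nonneg mult_nonneg_nonneg divide_nonneg_pos prod_nonneg pochhammer_nonneg
      pochhammer_pos divide_nonneg_nonneg zero_le_power) auto

lemma lauricella_FD_scaled_Euler_integral:
  fixes a c :: real and b z :: "nat \<Rightarrow> real"
  assumes a: "0 < a" "a < c" and bz: "\<forall>j<n. 0 < b j \<and> 1 < z j"
  shows "ennreal (Beta a (c - a) * ((\<Prod>j<n. (1 / z j) powr b j) * lauricella_FD n a b c (\<lambda>j. 1 / z j))) =
    (\<integral>\<^sup>+t. ennreal (t powr (a - 1) * (1 - t) powr (c - a - 1) * (\<Prod>j<n. (z j - t) powr (- b j)))
        * indicator {0..1} t \<partial>lborel)"
proof -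
  define P where "P = (\<Prod>j<n. (1 / z j) powr b j)"
  define \<phi> where "\<phi> = (\<lambda>t::real. t powr (a - 1) * (1 - t) powr (c - a - 1))"
  have P: "P \<ge> 0" unfolding P_def by (intro prod_nonneg) simp
  have scale: "P * (\<Prod>j<n. (1 - 1 / z j * t) powr (- b j)) = (\<Prod>j<n. (z j - t) powr (- b j))"
    if "t \<le> 1" for t
    unfolding P_def prod.distrib[symmetric]
  proof (intro prod.cong refl)
    fix j assume "j \<in> {..<n}"
    hence z: "z j > 0" "t < z j" using bz that by auto
    have "1 - 1 / z j * t = (z j - t) / z j" using z by (simp add: field_simps)
    thus "(1 / z j) powr b j * (1 - 1 / z j * t) powr (- b j) = (z j - t) powr (- b j)"
      using z by (simp add: powr_divide powr_minus_divide)
  qed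
  have "\<forall>j<n. 0 < b j \<and> 0 \<le> 1 / z j \<and> 1 / z j < 1" using bz by auto
  note Euler = lauricella_FD_Euler_integral[OF a this]
  have "ennreal (Beta a (c - a) * (P * lauricella_FD n a b c (\<lambda>j. 1 / z j)))
      = ennreal P * ennreal (Beta a (c - a) * lauricella_FD n a b c (\<lambda>j. 1 / z j))"
    by (metis P ennreal_mult' mult.left_commute)
  also have "\<dots> = ennreal P * (\<integral>\<^sup>+t. ennreal (\<phi> t * (\<Prod>j<n. (1 - 1 / z j * t) powr (- b j)))
      * indicator {0..1} t \<partial>lborel)"
    unfolding Euler \<phi>_def ..
  also have "\<dots> = (\<integral>\<^sup>+t. ennreal P * (ennreal (\<phi> t * (\<Prod>j<n. (1 - 1 / z j * t) powr (- b j))) * indicator {0..1} t) \<partial>lborel)"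
    by (rule nn_integral_cmult[symmetric]) (unfold \<phi>_def, measurable)
  also have "\<dots> = (\<integral>\<^sup>+t. ennreal (\<phi> t * (\<Prod>j<n. (z j - t) powr (- b j))) * indicator {0..1} t \<partial>lborel)"
    using P scale
    by (intro nn_integral_cong) (auto simp: indicator_def ennreal_mult'[symmetric] mult.left_commute[of P])
  finally show ?thesis by (simp add: P_def \<phi>_def)
qed

lemma scaled_lauricella_FD_mono:
  fixes a c :: real and b z z' :: "nat \<Rightarrow> real"
  assumes a: "0 < a" "a < c" and bz: "\<forall>j<n. 0 < b j \<and> 1 < z j \<and> 1 < z' j"
    and le: "\<And>t. 0 \<le> t \<Longrightarrow> t \<le> 1 \<Longrightarrow>
      (\<Prod>j<n. (z j - t) powr (- b j)) \<le> (\<Prod>j<n. (z' j - t) powr (- b j))"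
  shows "(\<Prod>j<n. (1 / z j) powr b j) * lauricella_FD n a b c (\<lambda>j. 1 / z j)
    \<le> (\<Prod>j<n. (1 / z' j) powr b j) * lauricella_FD n a b c (\<lambda>j. 1 / z' j)"
proof -
  have B: "Beta a (c - a) > 0"
    unfolding Beta_def using a by (auto intro!: Gamma_real_pos divide_pos_pos mult_pos_pos)
  have bz_z: "\<forall>j<n. 0 < b j \<and> 1 < z j" and bz_z': "\<forall>j<n. 0 < b j \<and> 1 < z' j" using bz by auto
  have "ennreal (Beta a (c - a) * ((\<Prod>j<n. (1 / z j) powr b j) * lauricella_FD n a b c (\<lambda>j. 1 / z j)))
    \<le> ennreal (Beta a (c - a) * ((\<Prod>j<n. (1 / z' j) powr b j) * lauricella_FD n a b c (\<lambda>j. 1 / z' j)))"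
    using le unfolding lauricella_FD_scaled_Euler_integral[OF a bz_z] lauricella_FD_scaled_Euler_integral[OF a bz_z']
    by (intro nn_integral_mono) (auto simp: indicator_def intro!: ennreal_leI mult_left_mono)
  moreover have "0 \<le> (\<Prod>j<n. (1 / z' j) powr b j) * lauricella_FD n a b c (\<lambda>j. 1 / z' j)"
    using a bz by (intro mult_nonneg_nonneg prod_nonneg lauricella_FD_nonneg) auto
  ultimately show ?thesis using B by (simp add: ennreal_le_iff mult_le_cancel_left_pos)
qed

section \<open>Comparison of coverage probabilities\<close>

lemma prod_powr_uminus_antimono:
  fixes p q :: "'a \<Rightarrow> real"
  assumes "\<forall>i\<in>A. 0 < p i" "\<forall>i\<in>A. 0 < q i" "(\<Prod>i\<in>A. p i) \<le> (\<Prod>i\<in>A. q i)" "0 \<le> \<mu>"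
  shows "(\<Prod>i\<in>A. q i powr (- \<mu>)) \<le> (\<Prod>i\<in>A. p i powr (- \<mu>))"
proof -
  have "(\<Prod>i\<in>A. q i) powr (- \<mu>) \<le> (\<Prod>i\<in>A. p i) powr (- \<mu>)"
    using assms by (intro powr_mono2') (auto intro: prod_pos)
  thus ?thesis using assms by (simp add: prod_powr_distrib less_imp_le)
qed

lemma prod_shifted_powr_antimono:
  fixes lam lamhat :: "nat \<Rightarrow> real"
  assumes c: "c > 0" and mu: "0 \<le> mu" and t: "t \<le> 1"
    and pos: "\<forall>i<n. 0 < lam i \<and> 0 < lamhat i"
    and prod_le: "\<And>s. s \<ge> 0 \<Longrightarrow> (\<Prod>i<n. s + lamhat i) \<le> (\<Prod>i<n. s + lam i)"
  shows "(\<Prod>i<n. (c * lam i + 1 - t) powr (- mu)) \<le> (\<Prod>i<n. (c * lamhat i + 1 - t) powr (- mu))"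
proof (rule prod_powr_uminus_antimono)
  define s where "s = (1 - t) / c"
  have s: "s \<ge> 0" using t c unfolding s_def by simp
  have "c * u + 1 - t = c * (s + u)" for u
    using c unfolding s_def by (simp add: field_simps)
  thus "(\<Prod>i<n. c * lamhat i + 1 - t) \<le> (\<Prod>i<n. c * lam i + 1 - t)"
    using prod_le[OF s] c by (simp add: prod.distrib)
  have "0 < c * u + 1 - t" if "0 < u" for u
    using mult_pos_pos[OF c that] t by linarith
  thus "\<forall>i\<in>{..<n}. 0 < c * lamhat i + 1 - t" "\<forall>i\<in>{..<n}. 0 < c * lam i + 1 - t"
    using pos by auto
qed (fact mu)

lemma coverage_mono:
  fixes lam lamhat :: "nat \<Rightarrow> real"
  assumes mu: "mu > 0" and m: "0 < m" "m \<le> 1" and k: "k > 0"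
    and pos: "\<forall>i<2*N. 0 < lam i \<and> 0 < lamhat i"
    and prod_le: "\<And>s. s \<ge> 0 \<Longrightarrow> (\<Prod>i<2*N. s + lamhat i) \<le> (\<Prod>i<2*N. s + lam i)"
  shows "coverage N mu m k lam \<le> coverage N mu m k lamhat"
proof -
  define z where "z = (\<lambda>(u :: nat \<Rightarrow> real) i. k * m * u i + 1)"
  define P where "P = (\<lambda>u. \<Prod>i<2*N. (1 / z u i) powr mu)"
  define G where "G = Gamma (2 * real N * mu + m) / (Gamma (2 * real N * mu + 1) * Gamma m)"
  define F where "F = (\<lambda>u. lauricella_FD (2*N) (1 - m) (\<lambda>_. mu) (2 * real N * mu + 1) (\<lambda>i. 1 / z u i))"
  have km: "k * m > 0" using k m by simp
  have Nmu: "0 \<le> 2 * real N * mu" using mu by simp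
  have lam: "\<forall>i<2*N. 0 < lam i" and lamhat: "\<forall>i<2*N. 0 < lamhat i" using pos by simp_all
  have z_gt: "\<forall>i<2*N. 1 < z u i" if "\<forall>i<2*N. 0 < u i" for u
    using that km by (simp add: z_def)
  have integrand_le:
    "(\<Prod>i<2*N. (z lam i - t) powr (- mu)) \<le> (\<Prod>i<2*N. (z lamhat i - t) powr (- mu))"
    if "t \<le> 1" for t
    unfolding z_def using prod_shifted_powr_antimono[OF km _ that pos prod_le] mu by simp
  have P_eq: "P u = (\<Prod>i<2*N. (z u i - 0) powr (- mu))" if "\<forall>i<2*N. 0 < u i" for u
    unfolding P_def
  proof (intro prod.cong refl)
    fix i assume "i \<in> {..<2*N}"
    hence "0 < z u i" using z_gt[OF that] by auto
    thus "(1 / z u i) powr mu = (z u i - 0) powr (- mu)" by (simp add: powr_minus_divide powr_divide)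
  qed
  have "P lam * F lam \<le> P lamhat * F lamhat"
  proof (cases "m = 1")
    case True
    \<comment> \<open>the Euler integral needs \<open>1 - m > 0\<close>, but here \<open>F\<^sub>D\<close> is identically 1\<close>
    thus ?thesis
      using integrand_le[of 0] by (simp add: F_def lauricella_FD_zero_left P_eq[OF lam] P_eq[OF lamhat])
  next
    case False
    have "0 < 1 - m" "1 - m < 2 * real N * mu + 1" using False m Nmu by linarith+
    thus ?thesis
      unfolding P_def F_def using integrand_le z_gt[OF lam] z_gt[OF lamhat] mu
      by (intro scaled_lauricella_FD_mono) auto
  qed
  moreover have "G \<ge> 0"
    unfolding G_def by (intro divide_nonneg_pos mult_pos_pos less_imp_le Gamma_real_pos; use Nmu m in linarith)
  moreover have "coverage N mu m k u = G * (P u * F u)" for u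
    unfolding coverage_def G_def P_def F_def z_def by (simp only: mult.assoc)
  ultimately show ?thesis by (simp add: mult_left_mono)
qed

lemma prod_shift_pos_imp_pos:
  fixes l :: "nat \<Rightarrow> real"
  assumes "\<And>s. s \<ge> 0 \<Longrightarrow> 0 < (\<Prod>i<n. s + l i)" "i < n"
  shows "0 < l i"
proof (rule ccontr)
  assume "\<not> 0 < l i"
  hence "0 < (\<Prod>j<n. - l i + l j)" by (intro assms(1)) simp
  moreover have "(\<Prod>j<n. - l i + l j) = 0" using assms(2) by (intro prod_zero) auto
  ultimately show False by linarith
qed

lemma interference_weights_pos:
  fixes lam :: "nat \<Rightarrow> real"
  assumes "mu > 0" "\<forall>i<N. d i > 0" "\<forall>i<N. eta i > 0"
    and "\<forall>i<N. lam (2*i) = d i powr (-alpha) / (mu * (1 + 1 / eta i))"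
    and "\<forall>i<N. lam (2*i+1) = d i powr (-alpha) / (mu * (1 + eta i))"
    and "i < 2*N"
  shows "0 < lam i"
proof -
  define j where "j = i div 2"
  have j: "j < N" "i = 2*j \<or> i = 2*j + 1" using assms(6) unfolding j_def by linarith+
  have "0 < d j powr (-alpha)" "0 < eta j" using assms(2,3) j(1) by auto
  with j(2) show ?thesis
    using assms(1,4,5) j(1) by (auto intro!: divide_pos_pos mult_pos_pos add_pos_pos)
qed

theorem mainTheorem4:
  fixes N :: nat and mu m T r alpha :: real
    and d eta lam lamhat :: "nat \<Rightarrow> real" and C :: "real mat"
  assumes "N \<ge> 1" and "mu > 0" and "0 < m" and "m \<le> 1"
    and "T > 0" and "r > 0" and "alpha \<ge> 2"
    and "\<forall>i<N. d i > 0" and "\<forall>i<N. eta i > 0"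
    and "\<forall>i<N. lam (2*i) = d i powr (-alpha) / (mu * (1 + 1 / eta i))"
    and "\<forall>i<N. lam (2*i+1) = d i powr (-alpha) / (mu * (1 + eta i))"
    and "C \<in> carrier_mat (2*N) (2*N)" and "sym_pos_def C"
    and "\<forall>i<2*N. C $$ (i,i) = 1"
    and "char_poly (mat_diag (2*N) lam * C) = (\<Prod>i<2*N. [:- lamhat i, 1:])"
  shows "coverage N mu m (T * r powr alpha) lamhat \<ge> coverage N mu m (T * r powr alpha) lam"
proof -
  have lam: "\<forall>i<2*N. 0 < lam i"
    using interference_weights_pos[OF assms(2,8-11)] by blast
  have shifted: "0 < (\<Prod>i<2*N. s + lamhat i) \<and> (\<Prod>i<2*N. s + lamhat i) \<le> (\<Prod>i<2*N. s + lam i)"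
    if "s \<ge> 0" for s
    using prod_shifted_eigenvalues_le[OF assms(12-14) lam assms(15) that] .
  have "\<forall>i<2*N. 0 < lam i \<and> 0 < lamhat i"
    using lam prod_shift_pos_imp_pos[where n="2*N" and l=lamhat] shifted by blast
  thus ?thesis
    using shifted assms(2-6) by (intro coverage_mono) simp_all
qed

end
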